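(* For all integers $n\ge0$, $pl_2(5n+3)\equiv0\pmod5$ and $pl_2(5n+4)\equiv0\pmod5$.
   Context: $pl_2(n)$ denotes the number of $2$-component plane partitions of $n$ (plane partitions of $n$ all of whose entries are $\le 2$), with $pl_2(0)=1$; equivalently $\sum_{n\ge0}pl_2(n)q^n=\frac{1}{1-q}\prod_{n=2}^{\infty}(1-q^n)^{-2}$. *)

theory Defs
  imports Main
begin

definition plane_partition :: "(nat \<Rightarrow> nat \<Rightarrow> nat) \<Rightarrow> bool" where
  "plane_partition f \<longleftrightarrow>
     (\<forall>i j. f (Suc i) j \<le> f i j) \<and> (\<forall>i j. f i (Suc j) \<le> f i j) \<and>
     finite {(i, j). f i j \<noteq> 0}"

definition pp_size :: "(nat \<Rightarrow> nat \<Rightarrow> nat) \<Rightarrow> nat" where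
  "pp_size f = (\<Sum>(i, j) \<in> {(i, j). f i j \<noteq> 0}. f i j)"

definition pl2 :: "nat \<Rightarrow> nat" where
  "pl2 n = card {f. plane_partition f \<and> (\<forall>i j. f i j \<le> 2) \<and> pp_size f = n}"

end

theory Submission
  imports Defs "HOL-Computational_Algebra.Formal_Power_Series" "HOL-Computational_Algebra.Polynomial"
begin

text \<open>Reading a plane partition with entries at most 2 row by row, it is the same as a pair of
  partitions \<open>\<mu> \<subseteq> \<lambda>\<close> (the numbers of entries \<open>\<ge> 1\<close> and \<open>= 2\<close> in each row) of total size
  \<open>|\<lambda>| + |\<mu>|\<close>. An explicit bijection matches the pairs that are not nested, of total size \<open>n + 1\<close>,
  with all pairs of total size \<open>n\<close>; hence \<open>\<Sum> pl\<^sub>2(n) q\<^sup>n = (1 - q) / E(q)\<^sup>2\<close> with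
  \<open>E(q) = \<Prod>i\<ge>1. 1 - q\<^sup>i\<close>, i.e. \<open>(\<Sum> pl\<^sub>2(n) q\<^sup>n) E(q)\<^sup>5 = (1 - q) E(q)\<^sup>3\<close>.
  Modulo 5 we have \<open>E(q)\<^sup>5 \<equiv> E(q\<^sup>5)\<close>, and by Jacobi's identity
  \<open>E(q)\<^sup>3 = \<Sum>k. (-1)\<^sup>k (2k + 1) q\<^bsup>k(k+1)/2\<^esup>\<close> the coefficients of \<open>E(q)\<^sup>3\<close> in degrees \<open>\<equiv> 2, 3, 4\<close>
  modulo 5 are divisible by 5: the only such degree that is a triangular number is \<open>\<equiv> 3\<close>, and then
  \<open>k \<equiv> 2\<close>, so \<open>5 | 2k + 1\<close>. So \<open>(1 - q) E(q)\<^sup>3\<close> vanishes modulo 5 in degrees \<open>\<equiv> 3, 4\<close>, and induction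
  on the degree transfers this to \<open>pl\<^sub>2\<close>. Jacobi's identity is obtained from the finite triple
  product, expanded by the \<open>q\<close>-binomial theorem and differentiated at \<open>w = 1\<close>.\<close>

unbundle fps_syntax

section \<open>Truncated power series and the Euler function\<close>

definition fps_agree :: "nat \<Rightarrow> 'a::comm_ring_1 fps \<Rightarrow> 'a fps \<Rightarrow> bool" where
  "fps_agree m A B \<longleftrightarrow> (\<forall>k\<le>m. A $ k = B $ k)"

lemma fps_agree_refl [simp]: "fps_agree m A A"
  by (simp add: fps_agree_def)

lemma fps_agree_sym: "fps_agree m A B \<Longrightarrow> fps_agree m B A"
  by (simp add: fps_agree_def)

lemma fps_agree_trans: "fps_agree m A B \<Longrightarrow> fps_agree m B C \<Longrightarrow> fps_agree m A C"
  by (simp add: fps_agree_def)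

lemma fps_agree_mult: "fps_agree m A A' \<Longrightarrow> fps_agree m B B' \<Longrightarrow> fps_agree m (A * B) (A' * B')"
  unfolding fps_agree_def fps_mult_nth by (auto intro!: sum.cong)

lemma fps_agree_sum:
  "(\<And>i. i \<in> S \<Longrightarrow> fps_agree m (f i) (g i)) \<Longrightarrow> fps_agree m (sum f S) (sum g S)"
  unfolding fps_agree_def fps_sum_nth by (auto intro!: sum.cong)

lemma fps_agree_X_power_mult: "fps_agree m A B \<Longrightarrow> fps_agree m (fps_X ^ e * A) (fps_X ^ e * B)"
  unfolding fps_agree_def by (simp add: fps_X_power_mult_nth)

lemma fps_agree_X_power_mult_0: "m < e \<Longrightarrow> fps_agree m (fps_X ^ e * A) 0"
  unfolding fps_agree_def by (simp add: fps_X_power_mult_nth)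

lemma fps_agree_mult_cancel:
  assumes "fps_agree m (A * B) (C * B)" and "B $ 0 = 1"
  shows "fps_agree m A C"
  unfolding fps_agree_def
proof (intro allI impI)
  fix k assume "k \<le> m"
  then show "A $ k = C $ k"
  proof (induction k rule: less_induct)
    case (less k)
    have nth_mult: "(F * B) $ k = F $ k + (\<Sum>i<k. F $ i * B $ (k - i))" for F :: "'a fps"
      unfolding fps_mult_nth atLeast0AtMost lessThan_Suc_atMost[symmetric]
      using assms(2) by simp
    have "(\<Sum>i<k. A $ i * B $ (k - i)) = (\<Sum>i<k. C $ i * B $ (k - i))"
      using less by (intro sum.cong) auto
    moreover have "(A * B) $ k = (C * B) $ k"
      using assms(1) less.prems by (simp add: fps_agree_def)
    ultimately show ?case by (simp add: nth_mult)
  qed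
qed

definition euler_partial :: "nat \<Rightarrow> int fps" where
  "euler_partial N = (\<Prod>i\<in>{1..N}. 1 - fps_X ^ i)"

lemma euler_partial_0 [simp]: "euler_partial 0 = 1"
  by (simp add: euler_partial_def)

lemma euler_partial_Suc: "euler_partial (Suc N) = euler_partial N * (1 - fps_X ^ Suc N)"
  by (simp add: euler_partial_def atLeastAtMostSuc_conv mult.commute)

lemma euler_partial_lessThan: "euler_partial N = (\<Prod>i<N. 1 - fps_X ^ Suc i)"
  by (induction N) (simp_all add: euler_partial_Suc)

lemma euler_partial_nth_0 [simp]: "euler_partial N $ 0 = 1"
  by (induction N) (simp_all add: euler_partial_Suc)

lemma fps_agree_euler_partial: "m \<le> N \<Longrightarrow> fps_agree m (euler_partial N) (euler_partial m)"
proof (induction N)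
  case (Suc N)
  show ?case
  proof (cases "m \<le> N")
    case True
    then have "fps_agree m (1 - fps_X ^ Suc N) (1 :: int fps)"
      by (auto simp: fps_agree_def)
    then show ?thesis
      using Suc True fps_agree_mult by (fastforce simp: euler_partial_Suc)
  qed (use Suc.prems in \<open>simp add: le_Suc_eq\<close>)
qed simp

text \<open>The Euler function \<open>\<Prod>i\<ge>1. 1 - X\<^sup>i\<close>: its \<open>m\<close>-th coefficient is already that of the
  \<open>m\<close>-th partial product.\<close>

definition euler_fps :: "int fps" where
  "euler_fps = Abs_fps (\<lambda>m. euler_partial m $ m)"

lemma fps_agree_euler_fps: "m \<le> N \<Longrightarrow> fps_agree m euler_fps (euler_partial N)"
  using fps_agree_euler_partial by (auto simp: fps_agree_def euler_fps_def)

section \<open>Gaussian binomials and Jacobi's identity\<close>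

lemma choose_two_Suc [simp]: "Suc k choose 2 = (k choose 2) + k"
  by (simp add: numeral_2_eq_2)

lemma zero_choose_two [simp]: "0 choose 2 = 0"
  by (simp add: numeral_2_eq_2)

lemma sum_lessThan_id_eq_choose_two: "(\<Sum>i<n. i) = n choose 2"
  by (induction n) simp_all

lemma two_times_choose_two: "2 * int (k choose 2) = int k * (int k - 1)"
  by (induction k) (simp_all add: algebra_simps)

lemma le_Suc_choose_two: "k \<le> Suc k choose 2"
  by simp

lemma Suc_choose_two_eq_iff: "Suc a choose 2 = Suc b choose 2 \<longleftrightarrow> a = b"
proof -
  have "strict_mono (\<lambda>k. Suc k choose 2)"
    unfolding strict_mono_Suc_iff by simp
  then show ?thesis by (rule strict_mono_eq)
qed

fun qbinom :: "'a::comm_ring_1 \<Rightarrow> nat \<Rightarrow> nat \<Rightarrow> 'a" where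
  "qbinom q n 0 = 1"
| "qbinom q 0 (Suc k) = 0"
| "qbinom q (Suc n) (Suc k) = qbinom q n k + q ^ Suc k * qbinom q n (Suc k)"

lemma qbinom_eq_0: "n < k \<Longrightarrow> qbinom q n k = 0"
proof (induction n arbitrary: k)
  case 0 then show ?case by (cases k) auto
next
  case (Suc n) then show ?case by (cases k) auto
qed

lemma qbinom_const: "qbinom [:x:] n k = [:qbinom x n k:]"
proof (induction n arbitrary: k)
  case 0 then show ?case by (cases k) simp_all
next
  case (Suc n) then show ?case by (cases k) (simp_all add: poly_const_pow)
qed

theorem qbinomial_theorem:
  fixes q y z :: "'a::comm_ring_1"
  shows "(\<Prod>i<m. y + z * q ^ i) = (\<Sum>j\<le>m. qbinom q m j * q ^ (j choose 2) * z ^ j * y ^ (m - j))"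
proof (induction m arbitrary: z)
  case (Suc m)
  define g where "g j = qbinom q m j * q ^ (j choose 2) * (z * q) ^ j * y ^ (m - j)" for j
  define h where "h k = q ^ (Suc k choose 2) * z ^ Suc k * y ^ (m - k)" for k
  have "(\<Prod>i<Suc m. y + z * q ^ i) = (y + z) * (\<Prod>i<m. y + (z * q) * q ^ i)"
    by (subst prod.lessThan_Suc_shift) (simp add: mult.assoc mult.commute mult.left_commute)
  also have "\<dots> = (\<Sum>j\<le>m. y * g j) + (\<Sum>j\<le>m. z * g j)"
    using Suc by (simp add: g_def distrib_right sum_distrib_left sum.distrib)
  also have "(\<Sum>j\<le>m. y * g j) = y ^ Suc m + (\<Sum>k\<le>m. q ^ Suc k * qbinom q m (Suc k) * h k)"
  proof -
    have "y * g (Suc k) = q ^ Suc k * qbinom q m (Suc k) * h k" if "k < m" for k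
    proof -
      have "y ^ (m - k) = y * y ^ (m - Suc k)"
        using that by (metis Suc_diff_Suc power_Suc)
      then show ?thesis
        by (simp add: g_def h_def power_mult_distrib power_add algebra_simps)
    qed
    then have "(\<Sum>k<m. y * g (Suc k)) = (\<Sum>k\<le>m. q ^ Suc k * qbinom q m (Suc k) * h k)"
      by (simp add: lessThan_Suc_atMost[symmetric] qbinom_eq_0)
    moreover have "(\<Sum>j\<le>m. y * g j) = y * g 0 + (\<Sum>k<m. y * g (Suc k))"
      by (cases m) (simp_all only: sum.atMost_Suc_shift lessThan_Suc_atMost, simp)
    ultimately show ?thesis by (simp add: g_def)
  qed
  also have "(\<Sum>j\<le>m. z * g j) = (\<Sum>k\<le>m. qbinom q m k * h k)"
    by (rule sum.cong) (simp_all add: g_def h_def power_mult_distrib power_add algebra_simps)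
  finally show ?case
    by (subst sum.atMost_Suc_shift) (simp add: h_def distrib_right sum.distrib algebra_simps)
qed simp

lemma qbinom_mult_euler_partial:
  "j \<le> N \<Longrightarrow> qbinom fps_X N j * euler_partial j * euler_partial (N - j) = euler_partial N"
proof (induction N arbitrary: j)
  case (Suc N)
  show ?case
  proof (cases j)
    case (Suc k)
    with Suc.prems have "k \<le> N" by simp
    let ?P = "euler_partial (Suc k) * euler_partial (Suc N - Suc k)"
    have first_term: "qbinom fps_X N k * ?P = euler_partial N * (1 - fps_X ^ Suc k)"
      using Suc.IH[OF \<open>k \<le> N\<close>] by (simp add: euler_partial_Suc algebra_simps)
    have second_term: "fps_X ^ Suc k * qbinom fps_X N (Suc k) * ?P
        = euler_partial N * (fps_X ^ Suc k - fps_X ^ Suc N)"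
    proof (cases "k < N")
      case True
      then have diff: "Suc N - Suc k = Suc (N - Suc k)" "Suc (N - Suc k) = N - k" by simp_all
      have X_powers: "fps_X ^ Suc k * fps_X ^ (N - k) = (fps_X ^ Suc N :: int fps)"
        using True by (simp add: power_add[symmetric])
      have "fps_X ^ Suc k * qbinom fps_X N (Suc k) * ?P
          = (qbinom fps_X N (Suc k) * euler_partial (Suc k) * euler_partial (N - Suc k))
            * (fps_X ^ Suc k * (1 - fps_X ^ (N - k)))"
        unfolding diff(1) unfolding euler_partial_Suc[of "N - Suc k"] unfolding diff(2)
        by (simp only: mult_ac)
      also have "\<dots> = euler_partial N * (fps_X ^ Suc k - fps_X ^ Suc k * fps_X ^ (N - k))"
        using Suc.IH True by (simp add: right_diff_distrib)
      finally show ?thesis unfolding X_powers .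
    next
      case False
      then show ?thesis using \<open>k \<le> N\<close> by (simp add: qbinom_eq_0)
    qed
    have "qbinom fps_X (Suc N) j * euler_partial j * euler_partial (Suc N - j)
        = qbinom fps_X N k * ?P + fps_X ^ Suc k * qbinom fps_X N (Suc k) * ?P"
      using Suc by (simp add: algebra_simps)
    also have "\<dots> = euler_partial N * (1 - fps_X ^ Suc N)"
      unfolding first_term second_term by (simp add: algebra_simps)
    finally show ?thesis by (simp add: euler_partial_Suc)
  qed simp
qed simp

lemma fps_agree_qbinom_mult_euler_fps:
  assumes "m < j" "m < N - j" "j \<le> N"
  shows "fps_agree m (qbinom fps_X N j * euler_fps) 1"
proof -
  have "fps_agree m (qbinom fps_X N j * euler_partial j * euler_partial (N - j)) (euler_partial N)"
    using qbinom_mult_euler_partial[OF assms(3)] by simp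
  moreover have "fps_agree m (qbinom fps_X N j * euler_partial j * euler_partial (N - j))
      (qbinom fps_X N j * euler_fps * euler_fps)"
    using assms by (intro fps_agree_mult fps_agree_refl fps_agree_sym[OF fps_agree_euler_fps]) simp_all
  moreover have "fps_agree m (euler_partial N) euler_fps"
    using assms by (intro fps_agree_sym[OF fps_agree_euler_fps]) simp
  ultimately have "fps_agree m ((qbinom fps_X N j * euler_fps) * euler_fps) (1 * euler_fps)"
    by (metis fps_agree_sym fps_agree_trans mult_1)
  then show ?thesis
    by (rule fps_agree_mult_cancel) (simp add: euler_fps_def)
qed

text \<open>The finite triple product is computed in \<open>(int fps) poly\<close>: \<open>q_poly\<close> is the constant \<open>q\<close>,
  \<open>w_poly\<close> the indeterminate \<open>w\<close>.\<close>

definition q_poly :: "int fps poly" where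
  "q_poly = [:fps_X:]"

definition w_poly :: "int fps poly" where
  "w_poly = [:0, 1:]"

definition triple_poly :: "nat \<Rightarrow> int fps poly" where
  "triple_poly n = (\<Prod>i<n. (q_poly ^ Suc i - w_poly) * (1 - w_poly * q_poly ^ Suc i))"

definition triple_exponent :: "nat \<Rightarrow> nat \<Rightarrow> nat" where
  "triple_exponent n j = (if j \<le> n then Suc (n - j) else j - n) choose 2"

lemma triple_exponent_eq: "triple_exponent n j = Suc (if j \<le> n then n - j else j - n - 1) choose 2"
  by (simp add: triple_exponent_def Suc_diff_Suc del: choose_two_Suc)

lemma choose_two_add_eq_triple_exponent:
  assumes "j \<le> 2 * n + 1"
  shows "(j choose 2) + n * (2 * n + 1 - j) = (n choose 2) + n + n * n + triple_exponent n j"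
proof -
  have "2 * int ((j choose 2) + n * (2 * n + 1 - j))
      = 2 * int ((n choose 2) + n + n * n + triple_exponent n j)"
  proof (cases "j \<le> n")
    case True
    moreover have "int (Suc (n - j)) = int n + 1 - int j" "int (2 * n + 1 - j) = 2 * int n + 1 - int j"
      using True by auto
    ultimately show ?thesis
      by (simp add: triple_exponent_def distrib_left two_times_choose_two del: choose_two_Suc)
        (simp add: algebra_simps)
  next
    case False
    moreover have "int (j - n) = int j - int n" "int (2 * n + 1 - j) = 2 * int n + 1 - int j"
      using False assms by auto
    ultimately show ?thesis
      by (simp add: triple_exponent_def distrib_left two_times_choose_two del: choose_two_Suc)
        (simp add: algebra_simps)
  qed
  then show ?thesis
    by (simp only: mult_cancel_left of_nat_eq_iff) simp
qed

lemma q_poly_power: "q_poly ^ a = [:fps_X ^ a:]"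
  by (simp add: q_poly_def poly_const_pow)

lemma prod_lessThan_add: "prod f {..<(a::nat) + b} = prod f {..<a} * prod (\<lambda>i. f (a + i)) {..<b}"
  by (induction b) (simp_all add: mult.assoc)

lemma triple_product_split:
  "(\<Prod>i<2*n+1. q_poly ^ n + (- w_poly) * q_poly ^ i)
     = q_poly ^ ((n choose 2) + n + n * n) * ((1 - w_poly) * triple_poly n)"
proof -
  define f where "f i = q_poly ^ n + (- w_poly) * q_poly ^ i" for i
  have "(\<Prod>i<2*n+1. f i) = (\<Prod>i<n. f i) * (\<Prod>i<Suc n. f (n + i))"
    using prod_lessThan_add[of f n "Suc n"] by (simp add: mult_2)
  also have "(\<Prod>i<Suc n. f (n + i)) = f n * (\<Prod>i<n. f (n + Suc i))"
    by (subst prod.lessThan_Suc_shift) simp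
  also have "(\<Prod>i<n. f i) = (\<Prod>i<n. q_poly ^ i * (q_poly ^ (n - i) - w_poly))"
  proof (rule prod.cong)
    fix i assume "i \<in> {..<n}"
    then have "q_poly ^ n = q_poly ^ i * q_poly ^ (n - i)" by (simp add: power_add[symmetric])
    then show "f i = q_poly ^ i * (q_poly ^ (n - i) - w_poly)" by (simp add: f_def algebra_simps)
  qed simp
  also have "\<dots> = q_poly ^ (n choose 2) * (\<Prod>i<n. q_poly ^ Suc i - w_poly)"
  proof -
    have "(\<Prod>i<n. q_poly ^ i) = q_poly ^ (n choose 2)"
      using power_sum[of q_poly "\<lambda>i. i" "{..<n}", symmetric] by (simp add: sum_lessThan_id_eq_choose_two)
    moreover have "(\<Prod>i<n. q_poly ^ (n - i) - w_poly) = (\<Prod>i<n. q_poly ^ Suc i - w_poly)"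
      using prod.nat_diff_reindex[of "\<lambda>i. q_poly ^ Suc i - w_poly" n] by (simp add: Suc_diff_Suc)
    ultimately show ?thesis by (simp add: prod.distrib)
  qed
  also have "f n = q_poly ^ n * (1 - w_poly)" by (simp add: f_def algebra_simps)
  also have "(\<Prod>i<n. f (n + Suc i)) = (\<Prod>i<n. q_poly ^ n * (1 - w_poly * q_poly ^ Suc i))"
    by (rule prod.cong) (simp_all add: f_def algebra_simps power_add)
  also have "\<dots> = q_poly ^ (n * n) * (\<Prod>i<n. 1 - w_poly * q_poly ^ Suc i)"
    by (simp add: prod.distrib power_mult)
  finally show ?thesis unfolding triple_poly_def prod.distrib f_def
    by (simp add: power_add algebra_simps)
qed

lemma neg_one_power_poly: "((- 1) :: 'a::comm_ring_1 poly) ^ j = [:(- 1) ^ j:]"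
  by (induction j) (simp_all add: mult.commute)

definition triple_coeff :: "nat \<Rightarrow> nat \<Rightarrow> int fps" where
  "triple_coeff n j = (- 1) ^ j * fps_X ^ triple_exponent n j * qbinom fps_X (2 * n + 1) j"

text \<open>The finite Jacobi triple product, obtained from the \<open>q\<close>-binomial theorem with \<open>y = q\<^sup>n\<close>, \<open>z = -w\<close>.\<close>

lemma triple_product_expansion:
  "(1 - w_poly) * triple_poly n = (\<Sum>j\<le>2*n+1. smult (triple_coeff n j) (w_poly ^ j))"
proof -
  let ?E = "(n choose 2) + n + n * n"
  let ?t = "\<lambda>j. qbinom q_poly (2*n+1) j * q_poly ^ (j choose 2) * (- w_poly) ^ j
    * (q_poly ^ n) ^ (2*n+1 - j)"
  have "q_poly ^ ?E * ((1 - w_poly) * triple_poly n) = (\<Sum>j\<le>2*n+1. ?t j)"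
    by (simp only: triple_product_split[symmetric] qbinomial_theorem)
  also have "\<dots> = q_poly ^ ?E * (\<Sum>j\<le>2*n+1. smult (triple_coeff n j) (w_poly ^ j))"
    unfolding sum_distrib_left
  proof (rule sum.cong)
    fix j assume "j \<in> {..2*n+1}"
    then have exponent: "(j choose 2) + n * (2*n+1 - j) = ?E + triple_exponent n j"
      by (intro choose_two_add_eq_triple_exponent) simp
    have "?t j = qbinom q_poly (2*n+1) j * q_poly ^ ((j choose 2) + n * (2*n+1 - j)) * (- w_poly) ^ j"
      by (simp add: power_add power_mult[symmetric] algebra_simps)
    then show "?t j = q_poly ^ ?E * smult (triple_coeff n j) (w_poly ^ j)"
      unfolding exponent power_add triple_coeff_def
      by (simp add: q_poly_def qbinom_const poly_const_pow power_minus[of w_poly] neg_one_power_poly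
          algebra_simps)
  qed simp
  finally show ?thesis
    using mult_left_cancel[of "q_poly ^ ?E"] by (simp add: q_poly_def)
qed

lemma pderiv_sum: "pderiv (sum f A) = (\<Sum>x\<in>A. pderiv (f x))"
  by (induction A rule: infinite_finite_induct) (simp_all add: pderiv_add)

lemma poly_pderiv_w_poly_power: "poly (pderiv (w_poly ^ j)) 1 = of_nat j"
  by (cases j) (simp_all add: pderiv_power w_poly_def pderiv_pCons)

text \<open>Differentiating the finite triple product in \<open>w\<close> at \<open>w = 1\<close> kills every factor but \<open>1 - w\<close>.\<close>

lemma weighted_triple_coeff_sum:
  "(\<Sum>j\<le>2*n+1. of_nat j * triple_coeff n j) = - ((- 1) ^ n * euler_partial n ^ 2)"
proof -
  have "poly (pderiv ((1 - w_poly) * triple_poly n)) 1 = - poly (triple_poly n) 1"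
    by (simp add: pderiv_mult pderiv_diff w_poly_def pderiv_pCons)
  also have "poly (triple_poly n) 1 = (\<Prod>i<n. (fps_X ^ Suc i - 1) * (1 - fps_X ^ Suc i))"
    by (simp add: triple_poly_def poly_prod q_poly_power w_poly_def del: power_Suc)
      (intro prod.cong refl, simp add: algebra_simps)
  also have "\<dots> = (\<Prod>i<n. (- 1) * (1 - fps_X ^ Suc i) ^ 2)"
    by (rule prod.cong) (simp_all add: power2_eq_square algebra_simps)
  also have "\<dots> = (- 1) ^ n * euler_partial n ^ 2"
    by (simp only: prod.distrib prod_constant card_lessThan)
      (simp add: euler_partial_lessThan power2_eq_square prod.distrib)
  finally have "poly (pderiv ((1 - w_poly) * triple_poly n)) 1 = - ((- 1) ^ n * euler_partial n ^ 2)" .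
  moreover have "poly (pderiv (\<Sum>j\<in>A. smult (c j) (w_poly ^ j))) 1 = (\<Sum>j\<in>A. of_nat j * c j)"
    for A and c :: "nat \<Rightarrow> int fps"
    by (simp add: pderiv_sum pderiv_smult poly_sum poly_pderiv_w_poly_power mult.commute)
  ultimately show ?thesis
    by (simp only: triple_product_expansion)
qed

lemma fps_nth_signed_X_power:
  "((of_nat j * (- 1) ^ j * fps_X ^ e) :: int fps) $ m = (if e = m then int j * (- 1) ^ j else 0)"
proof -
  have "((- 1) ^ j :: int fps) = fps_const ((- 1) ^ j)"
    by (induction j) (simp_all add: fps_const_mult[symmetric] fps_const_neg)
  then have "(of_nat j * (- 1) ^ j :: int fps) = fps_const (int j * (- 1) ^ j)"
    by (simp flip: fps_of_nat fps_const_mult)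
  then show ?thesis by (simp add: fps_mult_left_const_nth)
qed

lemma triple_exponent_le_imp:
  assumes "triple_exponent n j \<le> m" "n = 2 * m + 1" "j \<le> 2 * n + 1"
  shows "m < j" "m < 2 * n + 1 - j"
  using assms le_Suc_choose_two[of "if j \<le> n then n - j else j - n - 1"]
  by (auto simp: triple_exponent_eq split: if_splits)

text \<open>A term of the derivative identity either carries \<open>X\<^bsup>e\<^esup>\<close> with \<open>e > m\<close>, or its Gaussian binomial has
  both indices beyond \<open>m\<close> and times \<open>euler_fps\<close> agrees with \<open>1\<close> up to degree \<open>m\<close>.\<close>

lemma fps_agree_euler_fps_mult_triple_coeff:
  assumes n: "n = 2 * m + 1" and j: "j \<le> 2 * n + 1"
  shows "fps_agree m (euler_fps * (of_nat j * triple_coeff n j)) (of_nat j * (- 1) ^ j * fps_X ^ triple_exponent n j)"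
proof -
  define e where "e = triple_exponent n j"
  let ?N = "2 * n + 1"
  have "euler_fps * (of_nat j * triple_coeff n j)
      = fps_X ^ e * (of_nat j * (- 1) ^ j * (qbinom fps_X ?N j * euler_fps))"
    by (simp add: triple_coeff_def e_def algebra_simps)
  moreover have "fps_agree m (fps_X ^ e * (of_nat j * (- 1) ^ j * (qbinom fps_X ?N j * euler_fps)))
      (fps_X ^ e * (of_nat j * (- 1) ^ j))"
  proof (cases "e \<le> m")
    case True
    then have "fps_agree m (qbinom fps_X ?N j * euler_fps) 1"
      using triple_exponent_le_imp[of n j m] j n
      by (intro fps_agree_qbinom_mult_euler_fps) (simp_all add: e_def)
    then show ?thesis
      using fps_agree_X_power_mult fps_agree_mult[OF fps_agree_refl] by fastforce
  next
    case False
    then show ?thesis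
      by (meson fps_agree_X_power_mult_0 fps_agree_sym fps_agree_trans not_le)
  qed
  ultimately have "fps_agree m (euler_fps * (of_nat j * triple_coeff n j)) (fps_X ^ e * (of_nat j * (- 1) ^ j))"
    by (simp only:)
  then show ?thesis
    by (simp only: e_def mult_ac)
qed

lemma euler_fps_cube_nth:
  assumes n: "n = 2 * m + 1"
  shows "euler_fps ^ 3 $ m = (\<Sum>j | j \<le> 2 * n + 1 \<and> triple_exponent n j = m. int j * (- 1) ^ j)"
proof -
  define e where "e = triple_exponent n"
  let ?N = "2 * n + 1"
  have "fps_agree m (euler_fps * (\<Sum>j\<le>?N. of_nat j * triple_coeff n j))
      (\<Sum>j\<le>?N. of_nat j * (- 1) ^ j * fps_X ^ e j)"
    unfolding sum_distrib_left e_def using n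
    by (intro fps_agree_sum fps_agree_euler_fps_mult_triple_coeff) simp_all
  moreover have "euler_fps * (\<Sum>j\<le>?N. of_nat j * triple_coeff n j)
      = euler_partial n * euler_partial n * euler_fps"
    unfolding weighted_triple_coeff_sum using n by (simp add: power2_eq_square)
  moreover have "fps_agree m (euler_partial n * euler_partial n * euler_fps) (euler_fps ^ 3)"
    using fps_agree_euler_fps[of m n] n
    by (simp add: power3_eq_cube fps_agree_sym fps_agree_mult)
  ultimately have "fps_agree m (euler_fps ^ 3) (\<Sum>j\<le>?N. of_nat j * (- 1) ^ j * fps_X ^ e j)"
    by (metis fps_agree_sym fps_agree_trans)
  then have "euler_fps ^ 3 $ m = (\<Sum>j\<le>?N. if e j = m then int j * (- 1) ^ j else 0)"
    by (simp add: fps_agree_def fps_sum_nth fps_nth_signed_X_power del: sum.atMost_Suc)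
  also have "\<dots> = (\<Sum>j | j \<le> ?N \<and> e j = m. int j * (- 1) ^ j)"
    by (simp add: sum.If_cases Collect_conj_eq atMost_def Int_commute del: sum.atMost_Suc)
  finally show ?thesis by (simp add: e_def)
qed

lemma triple_exponent_eq_Suc_choose_two_iff:
  assumes "k < n" "j \<le> 2 * n + 1"
  shows "triple_exponent n j = Suc k choose 2 \<longleftrightarrow> j = n - k \<or> j = n + 1 + k"
  using assms unfolding triple_exponent_eq Suc_choose_two_eq_iff by auto

theorem euler_fps_cube_nth_triangular:
  "euler_fps ^ 3 $ (Suc k choose 2) = (- 1) ^ k * (2 * k + 1)"
proof -
  define m where "m = Suc k choose 2"
  define n where "n = 2 * m + 1"
  define d where "d = n - k"
  have km: "k \<le> m" unfolding m_def by (rule le_Suc_choose_two)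
  have support: "{j. j \<le> 2 * n + 1 \<and> triple_exponent n j = m} = {d, d + (2 * k + 1)}"
    using km triple_exponent_eq_Suc_choose_two_iff[of k n] by (auto simp: m_def n_def d_def)
  have sign: "(- 1 :: int) ^ d = - ((- 1) ^ k)"
  proof -
    have "odd (d + k)" using km by (simp add: d_def n_def)
    moreover have "(- 1 :: int) ^ k * (- 1) ^ k = 1"
      by (simp flip: power_mult_distrib)
    then have "(- 1 :: int) ^ d = (- 1) ^ (d + k) * (- 1) ^ k"
      by (simp add: power_add mult.assoc)
    ultimately show ?thesis by simp
  qed
  have "euler_fps ^ 3 $ m = (\<Sum>j\<in>{d, d + (2 * k + 1)}. int j * (- 1) ^ j)"
    unfolding euler_fps_cube_nth[OF n_def] support ..
  also have "\<dots> = (- 1) ^ k * (2 * k + 1)"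
    using sign by (simp add: power_add algebra_simps)
  finally show ?thesis unfolding m_def by simp
qed

theorem euler_fps_cube_nth_not_triangular:
  assumes "\<And>k. m \<noteq> Suc k choose 2"
  shows "euler_fps ^ 3 $ m = 0"
proof -
  have "triple_exponent (2 * m + 1) j \<noteq> m" for j
    unfolding triple_exponent_eq using assms by metis
  then show ?thesis by (simp add: euler_fps_cube_nth[OF refl])
qed

section \<open>Congruences modulo 5\<close>

lemma five_dvd_of_Suc_choose_two_mod5:
  assumes "(Suc k choose 2) mod 5 \<in> {2, 3, 4}"
  shows "(5::nat) dvd 2 * k + 1"
proof -
  define m where "m = Suc k choose 2"
  define r where "r = k mod 5"
  have "2 * m = (k + 1) * k"
    unfolding m_def by (induction k) (simp_all add: algebra_simps)
  then have "(2 * m) mod 5 = ((k + 1) mod 5 * (k mod 5)) mod 5"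
    by (simp add: mod_mult_eq)
  also have "(k + 1) mod 5 = (r + 1) mod 5"
    unfolding r_def by presburger
  finally have "(2 * m) mod 5 = ((r + 1) mod 5 * r) mod 5"
    by (simp add: r_def)
  moreover have "r = 0 \<or> r = 1 \<or> r = 2 \<or> r = 3 \<or> r = 4"
    unfolding r_def by presburger
  moreover have "m mod 5 \<in> {2, 3, 4}"
    using assms unfolding m_def .
  ultimately have "r = 2" by auto presburger+
  then show ?thesis unfolding r_def by presburger
qed

lemma five_dvd_euler_fps_cube_nth:
  assumes "m mod 5 \<in> {2, 3, 4}"
  shows "(5::int) dvd euler_fps ^ 3 $ m"
proof (cases "\<exists>k. m = Suc k choose 2")
  case True
  then obtain k where m: "m = Suc k choose 2" by blast
  then have "(5::nat) dvd 2 * k + 1"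
    using assms five_dvd_of_Suc_choose_two_mod5 by blast
  then have "(5::int) dvd 2 * int k + 1"
    by (metis of_nat_dvd_iff of_nat_numeral of_nat_Suc of_nat_mult Suc_eq_plus1 add.commute)
  then show ?thesis unfolding m euler_fps_cube_nth_triangular by simp
qed (simp add: euler_fps_cube_nth_not_triangular)

definition lacunary_mod :: "nat \<Rightarrow> int fps \<Rightarrow> bool" where
  "lacunary_mod p A \<longleftrightarrow> (\<forall>m. \<not> p dvd m \<longrightarrow> int p dvd A $ m)"

lemma lacunary_mod_mult:
  assumes "lacunary_mod p A" "lacunary_mod p B"
  shows "lacunary_mod p (A * B)"
  unfolding lacunary_mod_def
proof (intro allI impI)
  fix m assume m: "\<not> p dvd m"
  have "int p dvd A $ i * B $ (m - i)" if "i \<in> {0..m}" for i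
  proof -
    have "\<not> p dvd i \<or> \<not> p dvd (m - i)"
      using m that by (metis atLeastAtMost_iff dvd_add le_add_diff_inverse)
    then show ?thesis using assms unfolding lacunary_mod_def by auto
  qed
  then show "int p dvd (A * B) $ m"
    unfolding fps_mult_nth by (rule dvd_sum)
qed

lemma lacunary_mod_5_one_minus_X_power_pow5: "lacunary_mod 5 ((1 - fps_X ^ i) ^ 5)"
  unfolding lacunary_mod_def
proof (intro allI impI)
  fix m :: nat assume m: "\<not> 5 dvd m"
  define Y :: "int fps" where "Y = fps_X ^ i"
  define C where "C = - Y + 2 * Y ^ 2 - 2 * Y ^ 3 + Y ^ 4"
  have "(1 - Y) ^ 5 = 1 - Y ^ 5 + 5 * C"
    unfolding C_def by (simp add: power2_eq_square power3_eq_cube numeral_eq_Suc algebra_simps)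
  moreover have "Y ^ 5 = fps_X ^ (5 * i)"
    by (simp add: Y_def power_mult[symmetric] mult.commute)
  moreover have "(5 * C) $ m = 5 * C $ m"
    by (metis fps_mult_left_const_nth fps_numeral_fps_const)
  ultimately have "(1 - Y) ^ 5 $ m = 5 * C $ m"
    using m by auto
  then show "int 5 dvd (1 - fps_X ^ i) ^ 5 $ m"
    by (simp add: Y_def)
qed

lemma lacunary_mod_5_euler_fps_pow5: "lacunary_mod 5 (euler_fps ^ 5)"
proof -
  have partial: "lacunary_mod 5 (euler_partial N ^ 5)" for N
  proof (induction N)
    case 0 then show ?case by (simp add: lacunary_mod_def)
  next
    case (Suc N)
    then show ?case
      unfolding euler_partial_Suc power_mult_distrib
      by (intro lacunary_mod_mult lacunary_mod_5_one_minus_X_power_pow5)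
  qed
  have "euler_fps ^ 5 $ m = euler_partial m ^ 5 $ m" for m
  proof -
    have "fps_agree m (euler_fps ^ 5) (euler_partial m ^ 5)"
      using fps_agree_euler_fps[of m m] by (simp add: fps_agree_mult power_def)
    then show ?thesis by (simp add: fps_agree_def)
  qed
  then show ?thesis
    using partial by (simp add: lacunary_mod_def)
qed

text \<open>Multiplying by \<open>euler_fps ^ 3\<close> gives \<open>Q * euler_fps ^ 5 = (1 - X) * euler_fps ^ 3\<close>; modulo 5 the
  factor \<open>euler_fps ^ 5\<close> only mixes coefficients of \<open>Q\<close> in the same residue class modulo 5, and the
  right-hand side vanishes modulo 5 in degrees \<open>3, 4\<close> modulo 5 by Jacobi's identity.\<close>

theorem five_dvd_nth_if_mult_euler_fps_square:
  assumes Q: "Q * euler_fps ^ 2 = 1 - fps_X"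
  shows "m mod 5 \<in> {3, 4} \<Longrightarrow> (5::int) dvd Q $ m"
proof (induction m rule: less_induct)
  case (less m)
  have "m \<ge> 1" using less.prems by auto
  have "Q * euler_fps ^ 5 = (Q * euler_fps ^ 2) * euler_fps ^ 3"
    by (simp add: mult.assoc flip: power_add)
  also have "\<dots> = (1 - fps_X) * euler_fps ^ 3"
    by (simp only: Q)
  finally have "(Q * euler_fps ^ 5) $ m = ((1 - fps_X) * euler_fps ^ 3) $ m"
    by simp
  also have "\<dots> = euler_fps ^ 3 $ m - euler_fps ^ 3 $ (m - 1)"
    using \<open>m \<ge> 1\<close> by (simp add: algebra_simps fps_X_mult_nth)
  moreover have "(m - 1) mod 5 \<in> {2, 3, 4}"
    using less.prems \<open>m \<ge> 1\<close> by (cases m) (auto simp: mod_Suc split: if_splits)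
  ultimately have product: "(5::int) dvd (Q * euler_fps ^ 5) $ m"
    using less.prems five_dvd_euler_fps_cube_nth by fastforce
  have "(5::int) dvd Q $ i * euler_fps ^ 5 $ (m - i)" if "i < m" for i
  proof (cases "5 dvd (m - i)")
    case True
    then have "i mod 5 \<in> {3, 4}" using less.prems that by auto presburger+
    then show ?thesis using less.IH that by simp
  next
    case False
    then show ?thesis using lacunary_mod_5_euler_fps_pow5 by (simp add: lacunary_mod_def)
  qed
  then have lower_terms: "(5::int) dvd (\<Sum>i<m. Q $ i * euler_fps ^ 5 $ (m - i))"
    by (auto intro: dvd_sum)
  have "(Q * euler_fps ^ 5) $ m = Q $ m + (\<Sum>i<m. Q $ i * euler_fps ^ 5 $ (m - i))"
    unfolding fps_mult_nth atLeast0AtMost lessThan_Suc_atMost[symmetric]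
    by (simp add: fps_nth_power_0 euler_fps_def)
  then show ?case using product lower_terms by (simp add: dvd_add_left_iff)
qed

section \<open>Partitions and pairs of partitions\<close>

definition is_partition :: "(nat \<Rightarrow> nat) \<Rightarrow> bool" where
  "is_partition l \<longleftrightarrow> decseq l \<and> (\<exists>N. l N = 0)"

definition partition_size :: "(nat \<Rightarrow> nat) \<Rightarrow> nat" where
  "partition_size l = sum l {i. l i \<noteq> 0}"

definition partitions :: "nat \<Rightarrow> (nat \<Rightarrow> nat) set" where
  "partitions n = {l. is_partition l \<and> partition_size l = n}"

lemma is_partition_antimono: "is_partition l \<Longrightarrow> i \<le> j \<Longrightarrow> l j \<le> l i"
  by (simp add: is_partition_def decseqD)

lemma is_partition_eventually_0:
  assumes "is_partition l"
  obtains N where "\<And>i. N \<le> i \<Longrightarrow> l i = 0"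
proof -
  obtain N where "l N = 0" using assms by (auto simp: is_partition_def)
  then show ?thesis using that is_partition_antimono[OF assms, of N] by (metis le_zero_eq)
qed

lemma partition_size_eq_sum_lessThan:
  assumes "\<And>i. N \<le> i \<Longrightarrow> l i = 0"
  shows "partition_size l = sum l {..<N}"
proof -
  have "{i. l i \<noteq> 0} \<subseteq> {..<N}"
    using assms not_less by blast
  then show ?thesis
    unfolding partition_size_def by (intro sum.mono_neutral_left) auto
qed

lemma part_le_partition_size: "is_partition l \<Longrightarrow> l i \<le> partition_size l"
proof -
  assume "is_partition l"
  then obtain N where N: "\<And>i. N \<le> i \<Longrightarrow> l i = 0" by (metis is_partition_eventually_0)
  then have "partition_size l = sum l {..<max N (Suc i)}"
    by (intro partition_size_eq_sum_lessThan) auto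
  moreover have "l i \<le> sum l {..<max N (Suc i)}"
    by (rule member_le_sum) auto
  ultimately show ?thesis by simp
qed

lemma part_eq_0_if_size_le:
  assumes l: "is_partition l" and "partition_size l \<le> i"
  shows "l i = 0"
proof (rule ccontr)
  assume "l i \<noteq> 0"
  obtain N where N: "\<And>i. N \<le> i \<Longrightarrow> l i = 0" using l by (metis is_partition_eventually_0)
  have "Suc i = (\<Sum>j\<le>i. 1)" by simp
  also have "\<dots> \<le> (\<Sum>j\<le>i. l j)"
    using is_partition_antimono[OF l, of _ i] \<open>l i \<noteq> 0\<close> by (intro sum_mono) fastforce
  also have "\<dots> \<le> sum l {..<max N (Suc i)}"
    by (rule sum_mono2) auto
  also have "\<dots> = partition_size l"
    using N by (intro partition_size_eq_sum_lessThan[symmetric]) auto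
  finally show False using assms(2) by simp
qed

lemma finite_partitions: "finite (partitions n)"
proof (rule finite_subset)
  show "partitions n \<subseteq> {f. \<forall>x. (x \<in> {..<n} \<longrightarrow> f x \<in> {..n}) \<and> (x \<notin> {..<n} \<longrightarrow> f x = 0)}"
  proof (intro subsetI CollectI allI conjI impI)
    fix f x assume "f \<in> partitions n"
    then have "is_partition f" "partition_size f = n" by (auto simp: partitions_def)
    then show "f x \<in> {..n}" "x \<notin> {..<n} \<Longrightarrow> f x = 0"
      using part_le_partition_size part_eq_0_if_size_le by (auto simp: not_less)
  qed
qed (rule finite_set_of_finite_funs; simp)

lemma is_partition_shift:
  assumes l: "is_partition l"
  shows "is_partition (\<lambda>i. l (Suc i))"
proof -
  obtain N where "l N = 0" using l by (auto simp: is_partition_def)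
  then have "l (Suc N) = 0" using is_partition_antimono[OF l, of N "Suc N"] by simp
  then show ?thesis using l by (auto simp: is_partition_def decseq_Suc_iff)
qed

lemma is_partition_case_nat:
  assumes l: "is_partition l" and "l 0 \<le> k"
  shows "is_partition (case_nat k l)"
proof -
  obtain N where "l N = 0" using l by (auto simp: is_partition_def)
  then have "case_nat k l (Suc N) = 0" by simp
  moreover have "decseq (case_nat k l)"
    using assms by (auto simp: is_partition_def decseq_Suc_iff split: nat.split)
  ultimately show ?thesis unfolding is_partition_def by blast
qed

lemma partition_size_case_nat:
  assumes "is_partition l"
  shows "partition_size (case_nat k l) = k + partition_size l"
proof -
  obtain N where N: "\<And>i. N \<le> i \<Longrightarrow> l i = 0" using assms by (metis is_partition_eventually_0)
  have "partition_size (case_nat k l) = sum (case_nat k l) {..<Suc N}"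
    using N by (intro partition_size_eq_sum_lessThan) (auto split: nat.split)
  also have "\<dots> = k + sum l {..<N}"
    by (subst sum.lessThan_Suc_shift) simp
  also have "sum l {..<N} = partition_size l"
    using N by (intro partition_size_eq_sum_lessThan[symmetric])
  finally show ?thesis .
qed

lemma case_nat_shift: "case_nat (l 0) (\<lambda>i. l (Suc i)) = l"
  by (rule ext) (simp split: nat.split)

lemma partition_size_shift: "is_partition l \<Longrightarrow> partition_size l = l 0 + partition_size (\<lambda>i. l (Suc i))"
  using partition_size_case_nat[OF is_partition_shift, of l "l 0"] case_nat_shift[of l] by simp

definition partitions_parts_le :: "nat \<Rightarrow> nat \<Rightarrow> (nat \<Rightarrow> nat) set" where
  "partitions_parts_le n k = {l \<in> partitions n. l 0 \<le> k}"

lemma finite_partitions_parts_le: "finite (partitions_parts_le n k)"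
  unfolding partitions_parts_le_def using finite_partitions by simp

lemma partitions_parts_le_eq_partitions: "n \<le> k \<Longrightarrow> partitions_parts_le n k = partitions n"
  using part_le_partition_size[of _ 0] by (fastforce simp: partitions_parts_le_def partitions_def)

lemma card_partitions_parts_le_0: "card (partitions_parts_le n 0) = (if n = 0 then 1 else 0)"
proof -
  have zero: "l = (\<lambda>_. 0)" if "is_partition l" "l 0 = 0" for l
    using is_partition_antimono[OF that(1), of 0] that(2) by auto
  have "partitions_parts_le n 0 = (if n = 0 then {\<lambda>_. 0} else {})"
  proof (intro set_eqI iffI)
    fix l :: "nat \<Rightarrow> nat" assume "l \<in> partitions_parts_le n 0"
    then have "l = (\<lambda>_. 0)" "partition_size l = n"
      using zero by (auto simp: partitions_parts_le_def partitions_def)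
    then show "l \<in> (if n = 0 then {\<lambda>_. 0} else {})"
      by (auto simp: partition_size_def)
  next
    fix l :: "nat \<Rightarrow> nat" assume "l \<in> (if n = 0 then {\<lambda>_. 0} else {})"
    then show "l \<in> partitions_parts_le n 0"
      by (auto simp: partitions_parts_le_def partitions_def partition_size_def is_partition_def
          split: if_splits)
  qed
  then show ?thesis by simp
qed

lemma bij_betw_drop_largest_part:
  assumes "k \<le> n"
  shows "bij_betw (\<lambda>l i. l (Suc i)) {l \<in> partitions n. l 0 = k} (partitions_parts_le (n - k) k)"
proof (rule bij_betw_byWitness[where f' = "case_nat k"])
  show "\<forall>l\<in>{l \<in> partitions n. l 0 = k}. case_nat k (\<lambda>i. l (Suc i)) = l"
    using case_nat_shift by fastforce
  show "\<forall>l\<in>partitions_parts_le (n - k) k. (\<lambda>i. case_nat k l (Suc i)) = l"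
    by simp
  show "(\<lambda>l i. l (Suc i)) ` {l \<in> partitions n. l 0 = k} \<subseteq> partitions_parts_le (n - k) k"
    using is_partition_shift partition_size_shift is_partition_antimono[of _ 0 1]
    by (fastforce simp: partitions_parts_le_def partitions_def)
  show "case_nat k ` partitions_parts_le (n - k) k \<subseteq> {l \<in> partitions n. l 0 = k}"
    using is_partition_case_nat partition_size_case_nat assms
    by (auto simp: partitions_parts_le_def partitions_def)
qed

lemma card_partitions_parts_le_Suc:
  "card (partitions_parts_le n (Suc k))
     = card (partitions_parts_le n k)
       + (if Suc k \<le> n then card (partitions_parts_le (n - Suc k) (Suc k)) else 0)"
proof -
  let ?B = "{l \<in> partitions n. l 0 = Suc k}"
  have "partitions_parts_le n (Suc k) = partitions_parts_le n k \<union> ?B"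
    unfolding partitions_parts_le_def by auto
  moreover have "partitions_parts_le n k \<inter> ?B = {}"
    unfolding partitions_parts_le_def by auto
  moreover have "card ?B = (if Suc k \<le> n then card (partitions_parts_le (n - Suc k) (Suc k)) else 0)"
  proof (cases "Suc k \<le> n")
    case True
    then show ?thesis using bij_betw_drop_largest_part bij_betw_same_card by fastforce
  next
    case False
    then have "?B = {}"
      using part_le_partition_size[of _ 0] by (fastforce simp: partitions_def)
    then show ?thesis using False by (simp only: card.empty) simp
  qed
  ultimately show ?thesis
    using finite_partitions by (simp add: card_Un_disjoint finite_partitions_parts_le)
qed

lemma sum_lessThan_add: "sum f {..<(a::nat) + b} = sum f {..<a} + sum (\<lambda>i. f (a + i)) {..<b}"
  by (induction b) (simp_all add: add.assoc)

definition partition_pairs :: "nat \<Rightarrow> ((nat \<Rightarrow> nat) \<times> (nat \<Rightarrow> nat)) set" where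
  "partition_pairs n = {(a, b). is_partition a \<and> is_partition b \<and> partition_size a + partition_size b = n}"

lemma partition_pairs_eq_UN: "partition_pairs n = (\<Union>k\<in>{..n}. partitions k \<times> partitions (n - k))"
  unfolding partition_pairs_def partitions_def by auto

lemma card_partition_pairs:
  "card (partition_pairs n) = (\<Sum>k\<le>n. card (partitions k) * card (partitions (n - k)))"
proof -
  have "card (\<Union>k\<in>{..n}. partitions k \<times> partitions (n - k))
      = (\<Sum>k\<le>n. card (partitions k \<times> partitions (n - k)))"
    by (rule card_UN_disjoint) (simp, simp add: finite_partitions, auto simp: partitions_def)
  then show ?thesis unfolding partition_pairs_eq_UN by (simp add: card_cartesian_product)
qed

lemma finite_partition_pairs: "finite (partition_pairs n)"
  unfolding partition_pairs_eq_UN by (auto simp: finite_partitions)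

lemma is_partition_shift_right: "is_partition l \<Longrightarrow> is_partition (\<lambda>i. l (i - 1))"
proof -
  have "(\<lambda>i. l (i - 1)) = case_nat (l 0) l"
    by (rule ext) (simp split: nat.split)
  then show "is_partition l \<Longrightarrow> ?thesis"
    by (simp add: is_partition_case_nat)
qed

lemma is_partition_splice:
  assumes g: "is_partition g"
    and f: "\<And>i. Suc i < s \<Longrightarrow> f (Suc i) \<le> f i"
    and join: "0 < s \<Longrightarrow> g s \<le> f (s - 1)"
  shows "is_partition (\<lambda>i. if i < s then f i else g i)"
proof -
  obtain N where N: "\<And>i. N \<le> i \<Longrightarrow> g i = 0"
    using g by (metis is_partition_eventually_0)
  have "decseq (\<lambda>i. if i < s then f i else g i)"
    unfolding decseq_Suc_iff
  proof
    fix i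
    consider "Suc i < s" | "Suc i = s" | "s \<le> i" by linarith
    then show "(if Suc i < s then f (Suc i) else g (Suc i)) \<le> (if i < s then f i else g i)"
      by cases (use f join is_partition_antimono[OF g, of i "Suc i"] in auto)
  qed
  moreover have "(if N + s < s then f (N + s) else g (N + s)) = 0"
    using N by simp
  ultimately show ?thesis
    unfolding is_partition_def by blast
qed

text \<open>A pair \<open>(a, b)\<close> of partitions that is not nested, i.e.\ \<open>a t < b t\<close> for a first index \<open>t\<close>,
  is sent to a pair of total size one less: \<open>exch_fst\<close> is \<open>b 0 - 1, \<dots>, b t - 1, a t, a (t + 1), \<dots>\<close>
  and \<open>exch_snd\<close> is \<open>a 0 + 1, \<dots>, a (t - 1) + 1, b (t + 1), b (t + 2), \<dots>\<close>. The index \<open>t\<close> is recovered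
  from the image \<open>(x, y)\<close> as the first index with \<open>y t < x t + 2\<close>, which makes the map a bijection onto
  all pairs.\<close>

definition exch_fst :: "nat \<Rightarrow> (nat \<Rightarrow> nat) \<Rightarrow> (nat \<Rightarrow> nat) \<Rightarrow> nat \<Rightarrow> nat" where
  "exch_fst t a b = (\<lambda>i. if i < Suc t then b i - 1 else a (i - 1))"

definition exch_snd :: "nat \<Rightarrow> (nat \<Rightarrow> nat) \<Rightarrow> (nat \<Rightarrow> nat) \<Rightarrow> nat \<Rightarrow> nat" where
  "exch_snd t a b = (\<lambda>i. if i < t then a i + 1 else b (Suc i))"

definition unexch_fst :: "nat \<Rightarrow> (nat \<Rightarrow> nat) \<Rightarrow> (nat \<Rightarrow> nat) \<Rightarrow> nat \<Rightarrow> nat" where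
  "unexch_fst s x y = (\<lambda>i. if i < s then y i - 1 else x (Suc i))"

definition unexch_snd :: "nat \<Rightarrow> (nat \<Rightarrow> nat) \<Rightarrow> (nat \<Rightarrow> nat) \<Rightarrow> nat \<Rightarrow> nat" where
  "unexch_snd s x y = (\<lambda>i. if i < Suc s then x i + 1 else y (i - 1))"

definition exchange :: "(nat \<Rightarrow> nat) \<times> (nat \<Rightarrow> nat) \<Rightarrow> (nat \<Rightarrow> nat) \<times> (nat \<Rightarrow> nat)" where
  "exchange = (\<lambda>(a, b). let t = LEAST i. a i < b i in (exch_fst t a b, exch_snd t a b))"

definition unexchange :: "(nat \<Rightarrow> nat) \<times> (nat \<Rightarrow> nat) \<Rightarrow> (nat \<Rightarrow> nat) \<times> (nat \<Rightarrow> nat)" where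
  "unexchange = (\<lambda>(x, y). let s = LEAST i. y i < x i + 2 in (unexch_fst s x y, unexch_snd s x y))"

locale crossing_at =
  fixes a b :: "nat \<Rightarrow> nat" and t :: nat
  assumes part_a: "is_partition a" and part_b: "is_partition b"
    and crossing: "a t < b t" and below: "\<And>i. i < t \<Longrightarrow> b i \<le> a i"
begin

lemma part_b_pos: "i \<le> t \<Longrightarrow> 1 \<le> b i"
  using is_partition_antimono[OF part_b, of i t] crossing by simp

lemma is_partition_exch_fst: "is_partition (exch_fst t a b)"
  unfolding exch_fst_def
  using is_partition_shift_right[OF part_a] is_partition_antimono[OF part_b] crossing
  by (intro is_partition_splice) (auto simp: diff_le_mono)

lemma is_partition_exch_snd: "is_partition (exch_snd t a b)"
  unfolding exch_snd_def
  using is_partition_shift[OF part_b] is_partition_antimono[OF part_a] is_partition_antimono[OF part_b]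
    below[of "t - 1"]
  by (intro is_partition_splice) (auto intro: le_trans[of _ "b (t - 1)"])

lemma partition_size_exch:
  "partition_size (exch_fst t a b) + partition_size (exch_snd t a b) + 1 = partition_size a + partition_size b"
proof -
  obtain Na Nb where Na: "\<And>i. Na \<le> i \<Longrightarrow> a i = 0" and Nb: "\<And>i. Nb \<le> i \<Longrightarrow> b i = 0"
    using part_a part_b by (metis is_partition_eventually_0)
  define K where "K = Na + Nb"
  have za: "a i = 0" if "t + 1 + K \<le> i" for i using that by (intro Na) (simp add: K_def)
  have zb: "b i = 0" if "t + 1 + K \<le> i" for i using that by (intro Nb) (simp add: K_def)
  have pa: "partition_size a = sum a {..<t + (1 + K)}"
    by (rule partition_size_eq_sum_lessThan) (simp add: za)
  have pb: "partition_size b = sum b {..<(t+1) + (1 + K)}"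
    by (rule partition_size_eq_sum_lessThan) (simp add: zb)
  have pal: "partition_size (exch_fst t a b) = sum (exch_fst t a b) {..<(t+1) + (K + 1)}"
    by (rule partition_size_eq_sum_lessThan) (simp add: exch_fst_def za)
  have pbe: "partition_size (exch_snd t a b) = sum (exch_snd t a b) {..<t + (1 + K)}"
    by (rule partition_size_eq_sum_lessThan) (simp add: exch_snd_def zb)
  have s1: "sum (exch_fst t a b) {..<(t+1) + (K + 1)} = (\<Sum>i<t+1. b i - 1) + (\<Sum>i<K+1. a (t + i))"
    unfolding sum_lessThan_add by (simp add: exch_fst_def)
  have s2: "sum (exch_snd t a b) {..<t + (1 + K)} = (\<Sum>i<t. a i + 1) + (\<Sum>i<1+K. b ((t+1) + i))"
    unfolding sum_lessThan_add by (simp add: exch_snd_def)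
  have s3: "sum a {..<t + (1 + K)} = sum a {..<t} + (\<Sum>i<1+K. a (t + i))"
    by (rule sum_lessThan_add)
  have s4: "sum b {..<(t+1) + (1 + K)} = sum b {..<t+1} + (\<Sum>i<1+K. b ((t+1) + i))"
    by (rule sum_lessThan_add)
  have s5: "(\<Sum>i<t+1. b i - 1) + (t + 1) = sum b {..<t+1}"
  proof -
    have "(\<Sum>i<t+1. (b i - 1) + 1) = (\<Sum>i<t+1. b i - 1) + (\<Sum>i<t+1. 1)" by (rule sum.distrib)
    then have "(\<Sum>i<t+1. b i - 1) + (t + 1) = (\<Sum>i<t+1. (b i - 1) + 1)" by simp
    also have "\<dots> = sum b {..<t+1}"
    proof (rule sum.cong)
      fix i assume "i \<in> {..<t+1}"
      then have "1 \<le> b i" using part_b_pos by simp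
      then show "b i - 1 + 1 = b i" by simp
    qed simp
    finally show ?thesis .
  qed
  have s6: "(\<Sum>i<t. a i + 1) = sum a {..<t} + t"
    by (subst sum.distrib) simp
  show ?thesis unfolding pa pb pal pbe s1 s2 s3 s4 using s5 s6 by (simp add: add.commute)
qed

lemma Least_exch_stop: "(LEAST i. exch_snd t a b i < exch_fst t a b i + 2) = t"
proof (rule Least_equality)
  show "exch_snd t a b t < exch_fst t a b t + 2"
    using is_partition_antimono[OF part_b, of t "Suc t"] part_b_pos[of t]
    by (simp add: exch_fst_def exch_snd_def)
next
  fix y assume y: "exch_snd t a b y < exch_fst t a b y + 2"
  show "t \<le> y"
  proof (rule ccontr)
    assume "\<not> t \<le> y"
    then have "y < t" by simp
    then have "exch_snd t a b y = a y + 1" "exch_fst t a b y = b y - 1"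
      by (simp_all add: exch_fst_def exch_snd_def)
    moreover have "b y \<le> a y" "1 \<le> b y" using below[OF \<open>y < t\<close>] part_b_pos[of y] \<open>y < t\<close> by simp_all
    ultimately show False using y by simp
  qed
qed

lemma unexch_fst_exch: "unexch_fst t (exch_fst t a b) (exch_snd t a b) = a"
  by (rule ext) (simp add: unexch_fst_def exch_fst_def exch_snd_def)

lemma unexch_snd_exch: "unexch_snd t (exch_fst t a b) (exch_snd t a b) = b"
proof (rule ext)
  fix i show "unexch_snd t (exch_fst t a b) (exch_snd t a b) i = b i"
  proof (cases "i \<le> t")
    case True then show ?thesis using part_b_pos[OF True] by (simp add: unexch_snd_def exch_fst_def)
  next
    case False
    then have "\<not> i - 1 < t" "Suc (i - 1) = i" by auto
    then show ?thesis using False by (simp add: unexch_snd_def exch_snd_def)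
  qed
qed

lemma Least_crossing: "(LEAST i. a i < b i) = t"
  by (rule Least_equality) (use crossing below in \<open>auto simp: not_less[symmetric]\<close>)

lemma exchange_eq: "exchange (a, b) = (exch_fst t a b, exch_snd t a b)"
  by (simp add: exchange_def Least_crossing)

lemma unexchange_exchange: "unexchange (exchange (a, b)) = (a, b)"
proof -
  have "unexchange (exch_fst t a b, exch_snd t a b)
      = (unexch_fst t (exch_fst t a b) (exch_snd t a b), unexch_snd t (exch_fst t a b) (exch_snd t a b))"
    unfolding unexchange_def prod.case Let_def Least_exch_stop ..
  then show ?thesis by (simp add: exchange_eq unexch_fst_exch unexch_snd_exch)
qed

end

locale uncrossing_at =
  fixes x y :: "nat \<Rightarrow> nat" and s :: nat
  assumes part_x: "is_partition x" and part_y: "is_partition y"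
    and stop: "y s < x s + 2" and above: "\<And>i. i < s \<Longrightarrow> x i + 2 \<le> y i"
begin

lemma is_partition_unexch_fst: "is_partition (unexch_fst s x y)"
  unfolding unexch_fst_def
  using is_partition_shift[OF part_x] is_partition_antimono[OF part_x] is_partition_antimono[OF part_y]
    above[of "s - 1"]
  by (intro is_partition_splice) (auto intro: le_trans[of _ "x (s - 1)"] diff_le_mono)

lemma is_partition_unexch_snd: "is_partition (unexch_snd s x y)"
  unfolding unexch_snd_def
  using is_partition_shift_right[OF part_y] is_partition_antimono[OF part_x] stop
  by (intro is_partition_splice) auto

lemma crossing_at_unexch: "crossing_at (unexch_fst s x y) (unexch_snd s x y) s"
proof
  show "is_partition (unexch_fst s x y)" by (rule is_partition_unexch_fst)
  show "is_partition (unexch_snd s x y)" by (rule is_partition_unexch_snd)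
  show "unexch_fst s x y s < unexch_snd s x y s"
    using is_partition_antimono[OF part_x, of s "Suc s"] by (simp add: unexch_fst_def unexch_snd_def)
  fix i assume "i < s"
  then show "unexch_snd s x y i \<le> unexch_fst s x y i"
    using above[OF \<open>i < s\<close>] by (simp add: unexch_fst_def unexch_snd_def)
qed

lemma exch_fst_unexch: "exch_fst s (unexch_fst s x y) (unexch_snd s x y) = x"
proof (rule ext)
  fix i show "exch_fst s (unexch_fst s x y) (unexch_snd s x y) i = x i"
  proof (cases "i \<le> s")
    case True then show ?thesis by (simp add: unexch_snd_def exch_fst_def)
  next
    case False
    then have "\<not> i - 1 < s" "Suc (i - 1) = i" by auto
    then show ?thesis using False by (simp add: exch_fst_def unexch_fst_def)
  qed
qed

lemma exch_snd_unexch: "exch_snd s (unexch_fst s x y) (unexch_snd s x y) = y"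
proof (rule ext)
  fix i show "exch_snd s (unexch_fst s x y) (unexch_snd s x y) i = y i"
  proof (cases "i < s")
    case True then show ?thesis using above[OF True] by (simp add: exch_snd_def unexch_fst_def)
  next
    case False then show ?thesis by (simp add: exch_snd_def unexch_snd_def)
  qed
qed

lemma Least_stop: "(LEAST i. y i < x i + 2) = s"
  by (rule Least_equality) (use stop above in \<open>auto simp: not_less[symmetric]\<close>)

lemma unexchange_eq: "unexchange (x, y) = (unexch_fst s x y, unexch_snd s x y)"
  unfolding unexchange_def prod.case Let_def Least_stop ..

lemma exchange_unexchange: "exchange (unexchange (x, y)) = (x, y)"
  by (simp add: unexchange_eq crossing_at.exchange_eq[OF crossing_at_unexch]
      exch_fst_unexch exch_snd_unexch)

lemma partition_size_unexch:
  "partition_size (unexch_fst s x y) + partition_size (unexch_snd s x y)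
     = partition_size x + partition_size y + 1"
  using crossing_at.partition_size_exch[OF crossing_at_unexch]
  by (simp add: exch_fst_unexch exch_snd_unexch)

end

definition nested_pairs :: "nat \<Rightarrow> ((nat \<Rightarrow> nat) \<times> (nat \<Rightarrow> nat)) set" where
  "nested_pairs n = {(a, b). (a, b) \<in> partition_pairs n \<and> (\<forall>i. b i \<le> a i)}"

definition crossing_pairs :: "nat \<Rightarrow> ((nat \<Rightarrow> nat) \<times> (nat \<Rightarrow> nat)) set" where
  "crossing_pairs n = {(a, b). (a, b) \<in> partition_pairs n \<and> (\<exists>i. a i < b i)}"

lemma crossing_at_Least:
  assumes "(a, b) \<in> crossing_pairs n"
  shows "crossing_at a b (LEAST i. a i < b i)"
proof
  show "is_partition a" "is_partition b"
    using assms by (simp_all add: crossing_pairs_def partition_pairs_def)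
  have "\<exists>i. a i < b i"
    using assms by (simp add: crossing_pairs_def)
  then show "a (LEAST i. a i < b i) < b (LEAST i. a i < b i)"
    by (rule LeastI_ex)
  show "b i \<le> a i" if "i < (LEAST i. a i < b i)" for i
    using not_less_Least[OF that] by simp
qed

lemma uncrossing_at_Least:
  assumes "is_partition x" "is_partition y"
  shows "uncrossing_at x y (LEAST i. y i < x i + 2)"
proof
  show "is_partition x" "is_partition y" by fact+
  obtain N where "y N = 0"
    using assms(2) by (auto simp: is_partition_def)
  then have "\<exists>i. y i < x i + 2" by (intro exI[of _ N]) simp
  then show "y (LEAST i. y i < x i + 2) < x (LEAST i. y i < x i + 2) + 2"
    by (rule LeastI_ex)
  show "x i + 2 \<le> y i" if "i < (LEAST i. y i < x i + 2)" for i
    using not_less_Least[OF that] by simp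
qed

lemma bij_betw_exchange: "bij_betw exchange (crossing_pairs (Suc n)) (partition_pairs n)"
proof (rule bij_betw_byWitness[where f' = unexchange])
  show "\<forall>p\<in>crossing_pairs (Suc n). unexchange (exchange p) = p"
    using crossing_at.unexchange_exchange[OF crossing_at_Least] by clarify
  show "\<forall>p\<in>partition_pairs n. exchange (unexchange p) = p"
    using uncrossing_at.exchange_unexchange[OF uncrossing_at_Least]
    by (clarsimp simp: partition_pairs_def)
  show "exchange ` crossing_pairs (Suc n) \<subseteq> partition_pairs n"
  proof
    fix q assume "q \<in> exchange ` crossing_pairs (Suc n)"
    then obtain a b where ab: "(a, b) \<in> crossing_pairs (Suc n)" and q: "q = exchange (a, b)"
      by auto
    interpret crossing_at a b "LEAST i. a i < b i" using ab by (rule crossing_at_Least)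
    show "q \<in> partition_pairs n" unfolding q
      using ab partition_size_exch is_partition_exch_fst is_partition_exch_snd
      by (auto simp: exchange_eq crossing_pairs_def partition_pairs_def)
  qed
  show "unexchange ` partition_pairs n \<subseteq> crossing_pairs (Suc n)"
  proof
    fix q assume "q \<in> unexchange ` partition_pairs n"
    then obtain x y where xy: "(x, y) \<in> partition_pairs n" and q: "q = unexchange (x, y)"
      by auto
    interpret uncrossing_at x y "LEAST i. y i < x i + 2"
      using xy by (intro uncrossing_at_Least) (auto simp: partition_pairs_def)
    show "q \<in> crossing_pairs (Suc n)" unfolding q
      using xy partition_size_unexch crossing_at.crossing[OF crossing_at_unexch]
        is_partition_unexch_fst is_partition_unexch_snd
      by (auto simp: unexchange_eq crossing_pairs_def partition_pairs_def)
  qed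
qed

lemma crossing_pairs_0: "crossing_pairs 0 = {}"
proof -
  have "p \<notin> crossing_pairs 0" for p
  proof
    assume "p \<in> crossing_pairs 0"
    then obtain a b i where "is_partition b" "partition_size b = 0" "a i < b i"
      by (auto simp: crossing_pairs_def partition_pairs_def)
    then show False using part_le_partition_size[of b i] by simp
  qed
  then show ?thesis by blast
qed

lemma card_partition_pairs_eq:
  "card (partition_pairs n) = card (nested_pairs n) + (if n = 0 then 0 else card (partition_pairs (n - 1)))"
proof -
  have split: "partition_pairs n = nested_pairs n \<union> crossing_pairs n"
    by (auto simp: nested_pairs_def crossing_pairs_def not_le)
  have disjoint: "nested_pairs n \<inter> crossing_pairs n = {}"
    unfolding nested_pairs_def crossing_pairs_def using not_less by auto
  have finite: "finite (nested_pairs n)" "finite (crossing_pairs n)"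
    using finite_partition_pairs[of n] split by (auto intro: finite_subset)
  have "card (crossing_pairs n) = (if n = 0 then 0 else card (partition_pairs (n - 1)))"
  proof (cases n)
    case 0 then show ?thesis by (simp add: crossing_pairs_0)
  next
    case (Suc m) then show ?thesis using bij_betw_same_card[OF bij_betw_exchange[of m]] by simp
  qed
  then show ?thesis unfolding split using card_Un_disjoint[OF finite disjoint] by simp
qed

section \<open>Plane partitions with entries at most 2\<close>

definition pp_of_pair :: "(nat \<Rightarrow> nat) \<Rightarrow> (nat \<Rightarrow> nat) \<Rightarrow> nat \<Rightarrow> nat \<Rightarrow> nat" where
  "pp_of_pair a b = (\<lambda>i j. if j < b i then 2 else if j < a i then 1 else 0)"

definition row_length :: "(nat \<Rightarrow> nat \<Rightarrow> nat) \<Rightarrow> nat \<Rightarrow> nat" where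
  "row_length f i = card {j. f i j \<noteq> 0}"
definition row_twos :: "(nat \<Rightarrow> nat \<Rightarrow> nat) \<Rightarrow> nat \<Rightarrow> nat" where
  "row_twos f i = card {j. 2 \<le> f i j}"

lemma down_closed_eq_lessThan_card:
  assumes "finite S" "\<And>j j'. j \<in> S \<Longrightarrow> j' \<le> j \<Longrightarrow> j' \<in> S"
  shows "S = {..<card S}"
proof (cases "S = {}")
  case True then show ?thesis by simp
next
  case False
  have "S = {..Max S}"
  proof
    show "S \<subseteq> {..Max S}" using assms(1) by auto
    show "{..Max S} \<subseteq> S" using assms(2) Max_in[OF assms(1) False] by auto
  qed
  then show ?thesis by (metis card_atMost lessThan_Suc_atMost)
qed

lemma pp_size_pp_of_pair:
  assumes "is_partition a" "is_partition b" "\<And>i. b i \<le> a i"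
  shows "pp_size (pp_of_pair a b) = partition_size a + partition_size b"
proof -
  obtain N where N: "\<And>i. N \<le> i \<Longrightarrow> a i = 0" using assms(1) by (metis is_partition_eventually_0)
  have supp: "{(i, j). pp_of_pair a b i j \<noteq> 0} = (SIGMA i:{..<N}. {..<a i})"
  proof (intro set_eqI iffI)
    fix p assume "p \<in> {(i, j). pp_of_pair a b i j \<noteq> 0}"
    then obtain i j where p: "p = (i,j)" "pp_of_pair a b i j \<noteq> 0" by blast
    then have "j < a i" using assms(3)[of i] by (auto simp: pp_of_pair_def split: if_splits)
    moreover then have "i < N" using N by (metis not_le less_zeroE)
    ultimately show "p \<in> (SIGMA i:{..<N}. {..<a i})" using p by simp
  next
    fix p assume "p \<in> (SIGMA i:{..<N}. {..<a i})"
    then show "p \<in> {(i, j). pp_of_pair a b i j \<noteq> 0}" by (auto simp: pp_of_pair_def)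
  qed
  have inner: "(\<Sum>j<a i. pp_of_pair a b i j) = a i + b i" for i
  proof -
    have ai: "a i = b i + (a i - b i)" using assms(3)[of i] by simp
    have "(\<Sum>j<a i. pp_of_pair a b i j) = (\<Sum>j<b i + (a i - b i). pp_of_pair a b i j)" using ai by simp
    also have "\<dots> = (\<Sum>j<b i. pp_of_pair a b i j) + (\<Sum>j<a i - b i. pp_of_pair a b i (b i + j))"
      by (rule sum_lessThan_add)
    also have "(\<Sum>j<b i. pp_of_pair a b i j) = (\<Sum>j<b i. 2)"
      by (rule sum.cong) (auto simp: pp_of_pair_def)
    also have "(\<Sum>j<a i - b i. pp_of_pair a b i (b i + j)) = (\<Sum>j<a i - b i. 1)"
      by (rule sum.cong) (auto simp: pp_of_pair_def)
    finally show ?thesis using assms(3)[of i] by simp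
  qed
  have "pp_size (pp_of_pair a b) = (\<Sum>i<N. \<Sum>j<a i. pp_of_pair a b i j)"
    unfolding pp_size_def supp by (rule sum.Sigma[symmetric]) auto
  also have "\<dots> = (\<Sum>i<N. a i + b i)" using inner by simp
  also have "\<dots> = sum a {..<N} + sum b {..<N}" by (rule sum.distrib)
  also have "sum a {..<N} = partition_size a"
    using N by (intro partition_size_eq_sum_lessThan[symmetric]) auto
  also have "sum b {..<N} = partition_size b"
    using N assms(3) by (intro partition_size_eq_sum_lessThan[symmetric]) (metis le_zero_eq)
  finally show ?thesis .
qed

lemma plane_partition_pp_of_pair:
  assumes "is_partition a" "is_partition b" "\<And>i. b i \<le> a i"
  shows "plane_partition (pp_of_pair a b)"
  unfolding plane_partition_def
proof (intro conjI allI)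
  fix i j
  show "pp_of_pair a b (Suc i) j \<le> pp_of_pair a b i j"
    using is_partition_antimono[OF assms(1), of i "Suc i"] is_partition_antimono[OF assms(2), of i "Suc i"]
    by (auto simp: pp_of_pair_def)
  show "pp_of_pair a b i (Suc j) \<le> pp_of_pair a b i j"
    using assms(3)[of i] by (auto simp: pp_of_pair_def)
next
  obtain N where N: "\<And>i. N \<le> i \<Longrightarrow> a i = 0" using assms(1) by (metis is_partition_eventually_0)
  have "{(i, j). pp_of_pair a b i j \<noteq> 0} \<subseteq> {..<N} \<times> {..<a 0}"
  proof
    fix p assume "p \<in> {(i, j). pp_of_pair a b i j \<noteq> 0}"
    then obtain i j where p: "p = (i,j)" "pp_of_pair a b i j \<noteq> 0" by blast
    then have ji: "j < a i" using assms(3)[of i] by (auto simp: pp_of_pair_def split: if_splits)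
    then have "i < N" using N by (metis not_le less_zeroE)
    moreover have "a i \<le> a 0" using is_partition_antimono[OF assms(1), of 0 i] by simp
    ultimately show "p \<in> {..<N} \<times> {..<a 0}" using p ji by simp
  qed
  then show "finite {(i, j). pp_of_pair a b i j \<noteq> 0}" by (rule finite_subset) simp
qed

locale pp_le2 =
  fixes f :: "nat \<Rightarrow> nat \<Rightarrow> nat"
  assumes pp: "plane_partition f" and le2: "\<And>i j. f i j \<le> 2"
begin

lemma antimono_cols: "j' \<le> j \<Longrightarrow> f i j \<le> f i j'"
  using pp unfolding plane_partition_def by (metis lift_Suc_antimono_le)

lemma antimono_rows: "i' \<le> i \<Longrightarrow> f i j \<le> f i' j"
proof -
  have "\<And>k. f (Suc k) j \<le> f k j" using pp unfolding plane_partition_def by blast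
  then show "i' \<le> i \<Longrightarrow> f i j \<le> f i' j" by (rule lift_Suc_antimono_le[where f = "\<lambda>k. f k j"])
qed

lemma finite_support: "finite {(i, j). f i j \<noteq> 0}"
  using pp unfolding plane_partition_def by blast

lemma finite_row: "finite {j. f i j \<noteq> 0}"
proof -
  have "{j. f i j \<noteq> 0} \<subseteq> snd ` {(i, j). f i j \<noteq> 0}" by force
  then show ?thesis using finite_support by (metis finite_imageI finite_subset)
qed

lemma finite_row_twos: "finite {j. 2 \<le> f i j}"
  by (rule finite_subset[OF _ finite_row[of i]]) auto

lemma row_eq_lessThan: "{j. f i j \<noteq> 0} = {..<row_length f i}"
  unfolding row_length_def
proof (rule down_closed_eq_lessThan_card[OF finite_row])
  fix j j' assume "j \<in> {j. f i j \<noteq> 0}" "j' \<le> j"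
  then show "j' \<in> {j. f i j \<noteq> 0}" using antimono_cols[of j' j i] by simp
qed

lemma row_twos_eq_lessThan: "{j. 2 \<le> f i j} = {..<row_twos f i}"
  unfolding row_twos_def
proof (rule down_closed_eq_lessThan_card[OF finite_row_twos])
  fix j j' assume "j \<in> {j. 2 \<le> f i j}" "j' \<le> j"
  then show "j' \<in> {j. 2 \<le> f i j}" using antimono_cols[of j' j i] by simp
qed

lemma row_twos_le: "row_twos f i \<le> row_length f i"
  unfolding row_length_def row_twos_def by (rule card_mono[OF finite_row]) auto

lemma eq_pp_of_pair: "f = pp_of_pair (row_length f) (row_twos f)"
proof (intro ext)
  fix i j
  have a: "f i j \<noteq> 0 \<longleftrightarrow> j < row_length f i" using row_eq_lessThan[of i] by blast
  have b: "2 \<le> f i j \<longleftrightarrow> j < row_twos f i" using row_twos_eq_lessThan[of i] by blast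
  show "f i j = pp_of_pair (row_length f) (row_twos f) i j"
    using a b le2[of i j] by (auto simp: pp_of_pair_def)
qed

lemma row_length_eventually_0: "\<exists>N. \<forall>i\<ge>N. row_length f i = 0"
proof -
  obtain N where N: "\<forall>n\<in>fst ` {(i, j). f i j \<noteq> 0}. n < N"
    using finite_imageI[OF finite_support, of fst] unfolding finite_nat_set_iff_bounded by blast
  have "row_length f i = 0" if "N \<le> i" for i
  proof -
    have "{j. f i j \<noteq> 0} = {}"
    proof (rule ccontr)
      assume "{j. f i j \<noteq> 0} \<noteq> {}"
      then obtain j where "f i j \<noteq> 0" by blast
      then have "i \<in> fst ` {(i, j). f i j \<noteq> 0}" by force
      then show False using N that by auto
    qed
    then show ?thesis by (simp add: row_length_def)
  qed
  then show ?thesis by blast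
qed

lemma is_partition_row_length: "is_partition (row_length f)"
  unfolding is_partition_def decseq_Suc_iff
proof (intro conjI allI)
  fix i
  have "{j. f (Suc i) j \<noteq> 0} \<subseteq> {j. f i j \<noteq> 0}"
  proof
    fix j assume "j \<in> {j. f (Suc i) j \<noteq> 0}"
    then show "j \<in> {j. f i j \<noteq> 0}" using antimono_rows[of i "Suc i" j] by simp
  qed
  then show "row_length f (Suc i) \<le> row_length f i"
    unfolding row_length_def by (intro card_mono[OF finite_row])
next
  show "\<exists>N. row_length f N = 0" using row_length_eventually_0 by blast
qed

lemma is_partition_row_twos: "is_partition (row_twos f)"
  unfolding is_partition_def decseq_Suc_iff
proof (intro conjI allI)
  fix i
  have "{j. 2 \<le> f (Suc i) j} \<subseteq> {j. 2 \<le> f i j}"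
  proof
    fix j assume "j \<in> {j. 2 \<le> f (Suc i) j}"
    then show "j \<in> {j. 2 \<le> f i j}" using antimono_rows[of i "Suc i" j] by simp
  qed
  then show "row_twos f (Suc i) \<le> row_twos f i"
    unfolding row_twos_def by (intro card_mono[OF finite_row_twos])
next
  obtain N where "\<forall>i\<ge>N. row_length f i = 0" using row_length_eventually_0 by blast
  then have "row_twos f N = 0" using row_twos_le[of N] by simp
  then show "\<exists>N. row_twos f N = 0" by blast
qed

end

lemma row_length_pp_of_pair: "(\<And>i. b i \<le> a i) \<Longrightarrow> row_length (pp_of_pair a b) = a"
proof (rule ext)
  fix i assume h: "\<And>i. b i \<le> a i"
  have "{j. pp_of_pair a b i j \<noteq> 0} = {..<a i}" using h[of i] by (auto simp: pp_of_pair_def)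
  then show "row_length (pp_of_pair a b) i = a i" by (simp add: row_length_def)
qed

lemma row_twos_pp_of_pair: "row_twos (pp_of_pair a b) = b"
proof (rule ext)
  fix i
  have "{j. 2 \<le> pp_of_pair a b i j} = {..<b i}" by (auto simp: pp_of_pair_def)
  then show "row_twos (pp_of_pair a b) i = b i" by (simp add: row_twos_def)
qed

lemma pl2_eq_card_nested_pairs: "pl2 n = card (nested_pairs n)"
proof -
  let ?PL = "{f. plane_partition f \<and> (\<forall>i j. f i j \<le> 2) \<and> pp_size f = n}"
  have "bij_betw (case_prod pp_of_pair) (nested_pairs n) ?PL"
  proof (rule bij_betw_byWitness[where f' = "\<lambda>f. (row_length f, row_twos f)"])
    show "\<forall>p\<in>nested_pairs n. (row_length (case_prod pp_of_pair p), row_twos (case_prod pp_of_pair p)) = p"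
      by (auto simp: nested_pairs_def row_length_pp_of_pair row_twos_pp_of_pair)
    show "\<forall>f\<in>?PL. case_prod pp_of_pair (row_length f, row_twos f) = f"
      using pp_le2.eq_pp_of_pair pp_le2.intro by auto
    show "case_prod pp_of_pair ` nested_pairs n \<subseteq> ?PL"
    proof
      fix f assume "f \<in> case_prod pp_of_pair ` nested_pairs n"
      then obtain a b where f: "f = pp_of_pair a b"
        and ab: "is_partition a" "is_partition b" "partition_size a + partition_size b = n" "\<And>i. b i \<le> a i"
        by (auto simp: nested_pairs_def partition_pairs_def)
      show "f \<in> ?PL"
        using plane_partition_pp_of_pair[OF ab(1,2,4)] pp_size_pp_of_pair[OF ab(1,2,4)] ab(3) f
        by (auto simp: pp_of_pair_def)
    qed
    show "(\<lambda>f. (row_length f, row_twos f)) ` ?PL \<subseteq> nested_pairs n"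
    proof
      fix p assume "p \<in> (\<lambda>f. (row_length f, row_twos f)) ` ?PL"
      then obtain f where p: "p = (row_length f, row_twos f)"
        and f: "plane_partition f" "\<forall>i j. f i j \<le> 2" "pp_size f = n"
        by blast
      interpret pp_le2 f using f by unfold_locales auto
      have "pp_size f = partition_size (row_length f) + partition_size (row_twos f)"
        using pp_size_pp_of_pair[OF is_partition_row_length is_partition_row_twos row_twos_le] eq_pp_of_pair
        by simp
      then show "p \<in> nested_pairs n"
        using p f(3) is_partition_row_length is_partition_row_twos row_twos_le
        by (simp add: nested_pairs_def partition_pairs_def)
    qed
  qed
  then show ?thesis unfolding pl2_def by (simp add: bij_betw_same_card)
qed

section \<open>Generating functions\<close>

definition partition_fps_le :: "nat \<Rightarrow> int fps" where
  "partition_fps_le k = Abs_fps (\<lambda>n. int (card (partitions_parts_le n k)))"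

definition partition_fps :: "int fps" where
  "partition_fps = Abs_fps (\<lambda>n. int (card (partitions n)))"

definition pl2_fps :: "int fps" where
  "pl2_fps = Abs_fps (\<lambda>n. int (pl2 n))"

lemma partition_fps_le_Suc_mult: "partition_fps_le (Suc k) * (1 - fps_X ^ Suc k) = partition_fps_le k"
proof (rule fps_ext)
  fix n
  have "(partition_fps_le (Suc k) * (1 - fps_X ^ Suc k)) $ n
      = partition_fps_le (Suc k) $ n - (fps_X ^ Suc k * partition_fps_le (Suc k)) $ n"
    by (simp add: algebra_simps)
  also have "\<dots> = int (card (partitions_parts_le n (Suc k)))
      - (if Suc k \<le> n then int (card (partitions_parts_le (n - Suc k) (Suc k))) else 0)"
    by (simp add: fps_X_power_mult_nth partition_fps_le_def del: power_Suc)
  also have "\<dots> = partition_fps_le k $ n"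
    using card_partitions_parts_le_Suc[of n k] by (simp add: partition_fps_le_def)
  finally show "(partition_fps_le (Suc k) * (1 - fps_X ^ Suc k)) $ n = partition_fps_le k $ n" .
qed

lemma partition_fps_le_mult_euler_partial: "partition_fps_le k * euler_partial k = 1"
proof (induction k)
  case 0
  then show ?case
    by (intro fps_ext) (simp add: partition_fps_le_def card_partitions_parts_le_0)
next
  case (Suc k)
  have "partition_fps_le (Suc k) * euler_partial (Suc k)
      = (partition_fps_le (Suc k) * (1 - fps_X ^ Suc k)) * euler_partial k"
    by (simp only: euler_partial_Suc mult_ac)
  then show ?case
    using Suc by (simp only: partition_fps_le_Suc_mult)
qed

lemma partition_fps_mult_euler_fps: "partition_fps * euler_fps = 1"
proof (rule fps_ext)
  fix m
  have "fps_agree m partition_fps (partition_fps_le m)"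
    using partitions_parts_le_eq_partitions
    by (simp add: fps_agree_def partition_fps_def partition_fps_le_def)
  then have "fps_agree m (partition_fps * euler_fps) (partition_fps_le m * euler_partial m)"
    by (intro fps_agree_mult fps_agree_euler_fps) simp_all
  then show "(partition_fps * euler_fps) $ m = 1 $ m"
    using partition_fps_le_mult_euler_partial by (simp add: fps_agree_def)
qed

lemma partition_fps_square_nth: "partition_fps ^ 2 $ n = int (card (partition_pairs n))"
  by (simp add: power2_eq_square fps_mult_nth partition_fps_def card_partition_pairs atLeast0AtMost)

lemma pl2_fps_eq: "pl2_fps = (1 - fps_X) * partition_fps ^ 2"
proof (rule fps_ext)
  fix n
  have "((1 - fps_X) * partition_fps ^ 2) $ n
      = partition_fps ^ 2 $ n - (if n = 0 then 0 else partition_fps ^ 2 $ (n - 1))"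
    by (simp add: algebra_simps fps_X_mult_nth)
  also have "\<dots> = int (card (nested_pairs n))"
    using card_partition_pairs_eq[of n] by (simp add: partition_fps_square_nth)
  finally show "pl2_fps $ n = ((1 - fps_X) * partition_fps ^ 2) $ n"
    by (simp add: pl2_fps_def pl2_eq_card_nested_pairs)
qed

lemma pl2_fps_mult_euler_fps_square: "pl2_fps * euler_fps ^ 2 = 1 - fps_X"
proof -
  have "pl2_fps * euler_fps ^ 2 = (1 - fps_X) * (partition_fps * euler_fps) ^ 2"
    by (simp add: pl2_fps_eq power_mult_distrib algebra_simps)
  then show ?thesis by (simp add: partition_fps_mult_euler_fps)
qed

theorem theorem4:
  fixes n :: nat
  shows "pl2 (5 * n + 3) mod 5 = 0 \<and> pl2 (5 * n + 4) mod 5 = 0"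
proof -
  have "5 dvd pl2 m" if "m mod 5 \<in> {3, 4}" for m
  proof -
    have "(5::int) dvd pl2_fps $ m"
      using five_dvd_nth_if_mult_euler_fps_square[OF pl2_fps_mult_euler_fps_square that] .
    then show ?thesis
      by (simp add: pl2_fps_def) (metis of_nat_dvd_iff of_nat_numeral)
  qed
  then show ?thesis by simp
qed

end
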